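(* Consider the protocol $\Pi_{(t+1,n)}$ described in the context, with $1\le t$ and $n>2t$, run on an automaton $\mathcal{A}=(ST,\Sigma,\mu)$ with states $s_1,\dots,s_m$ from initial state $s_{\mathrm{init}}$. Then for every $r\ge 0$, after the $r$-th clock tick has been processed, and for every $j\in\{1,\dots,m\}$, there is a polynomial $Q_j$ over $\mathbb{F}$ of degree at most $t$ such that $\ell^i_j=Q_j(i)$ for all $i=1,\dots,n$, and $Q_j(0)=1$ if $s_j$ is the state reached by $\mathcal{A}$ from $s_{\mathrm{init}}$ on the input symbols received during ticks $1,\dots,r$, while $Q_j(0)=0$ otherwise. Consequently, the labels of any $t+1$ agents determine (by Lagrange interpolation at $0$) all the values $Q_j(0)$, and hence the current state of $\mathcal{A}$.
   Context: A finite-state automaton $\mathcal{A}$ has finite state set $ST=\{s_1,\dots,s_m\}$, finite alphabet $\Sigma$ and transition function $\mu:ST\times\Sigma\to ST$. Time proceeds in global clock ticks $r=1,2,\dots$; at each tick at most one input symbol arrives (simultaneously to all agents), possibly none. Protocol $\Pi_{(t+1,n)}$. Let $\mathbb{F}$ be a finite field with $|\mathbb{F}|>n$, and identify agent indices $1,\dots,n$ with distinct nonzero elements of $\mathbb{F}$. Let $G:\{0,1\}^{len}\to\mathbb{F}^m\times\{0,1\}^{len}$, writing $G(x)=(b_1,\dots,b_m)\|S$. Let $\mathcal{T}$ be the family of all subsets of $\{A_1,\dots,A_n\}$ of size $n-t+1$. Initialization: for each $j$ the dealer picks a uniformly random polynomial $f_j$ over $\mathbb{F}$ of degree at most $t$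 with $f_j(0)=1$ if $j=\mathrm{init}$ and $f_j(0)=0$ otherwise (Shamir sharing), and agent $A_i$ sets $\ell^i_j:=f_j(i)$. For each $T\in\mathcal{T}$ the dealer picks a uniform seed $\mathrm{seed}^T\in\{0,1\}^{len}$ and gives it to every agent in $T$. Event processing (at every tick): each agent $A_i$ (1) if a symbol $\gamma$ arrived, replaces simultaneously for all $j$: $\ell^i_j:=\sum_{k:\,\mu(s_k,\gamma)=s_j}\ell^i_k$ (sum in $\mathbb{F}$; empty sum $=0$); (2) for each $T\in\mathcal{T}$ with $A_i\in T$, computes $G(\mathrm{seed}^T)=(b^T_1,\dots,b^T_m)\|S^T$ and replaces $\mathrm{seed}^T$ by $S^T$ (erasing the old seed); (3) for each $j$ sets $\ell^i_j:=\ell^i_j+\sum_{T\in\mathcal{T},\,A_i\in T}P^T_j(i)$, where $P^T_j$ is the unique polynomial of degree at most $t$ with $P^T_j(0)=0$, $P^T_j(a)=0$ for every index $a$ with $A_a\notin T$ (there are $t-1$ such), and $P^T_j(k_T)=b^T_j$ where $k_T$ is the minimal index of an agent in $T$. Reconstruction: at least $t+1$ agents submit their labels; for each $j$ the dealer interpolates the degree-$\le t$ polynomial through their points $(i,\ell^i_j)$, evaluates it at $0$, and outputs the state whose value is $1$. *)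

theory Defs
  imports "HOL-Computational_Algebra.Polynomial"
begin

text \<open>Agents are numbered 1..n; idx i is the nonzero field element identified with agent i.
States of the automaton are the elements of a finite type 's (so m = CARD('s)).
Seeds are elements of an abstract type 'seed (standing for bit strings of length len);
G seed = (b, S) with b :: 's \<Rightarrow> 'f the vector (b_1,...,b_m) and S the next seed.\<close>

definition Tfam :: "nat \<Rightarrow> nat \<Rightarrow> nat set set" where
  "Tfam n t = {T. T \<subseteq> {1..n} \<and> card T = n - t + 1}"

definition PT :: "nat \<Rightarrow> nat \<Rightarrow> (nat \<Rightarrow> 'f::field) \<Rightarrow> nat set \<Rightarrow> 'f \<Rightarrow> 'f poly" where
  "PT n t idx T b = (THE p. degree p \<le> t \<and> poly p 0 = 0
      \<and> (\<forall>a\<in>{1..n} - T. poly p (idx a) = 0) \<and> poly p (idx (Min T)) = b)"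

text \<open>One tick of event processing for agent i. Local state: labels (l_j)_j and the agent's
own copy of seed^T for each T (only used for T containing i).\<close>
definition agent_step ::
  "nat \<Rightarrow> nat \<Rightarrow> (nat \<Rightarrow> 'f::field) \<Rightarrow> ('s::finite \<Rightarrow> 'a \<Rightarrow> 's)
   \<Rightarrow> ('seed \<Rightarrow> ('s \<Rightarrow> 'f) \<times> 'seed) \<Rightarrow> nat \<Rightarrow> 'a option
   \<Rightarrow> ('s \<Rightarrow> 'f) \<times> (nat set \<Rightarrow> 'seed) \<Rightarrow> ('s \<Rightarrow> 'f) \<times> (nat set \<Rightarrow> 'seed)" where
  "agent_step n t idx mu G i inp st =
    (let l = fst st; sd = snd st;
         l1 = (case inp of None \<Rightarrow> l
                 | Some g \<Rightarrow> (\<lambda>j. \<Sum>k\<in>{k. mu k g = j}. l k));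
         l2 = (\<lambda>j. l1 j + (\<Sum>T\<in>{T\<in>Tfam n t. i \<in> T}.
                              poly (PT n t idx T (fst (G (sd T)) j)) (idx i)));
         sd' = (\<lambda>T. if i \<in> T then snd (G (sd T)) else sd T)
     in (l2, sd'))"

text \<open>The local state of agent i after tick r has been processed (r = 0: after initialization).
f j are the dealer's Shamir polynomials, seed0 T the dealer's seed for T, and
inp r the symbol (if any) arriving at tick r (r \<ge> 1).\<close>
primrec run ::
  "nat \<Rightarrow> nat \<Rightarrow> (nat \<Rightarrow> 'f::field) \<Rightarrow> ('s::finite \<Rightarrow> 'a \<Rightarrow> 's)
   \<Rightarrow> ('seed \<Rightarrow> ('s \<Rightarrow> 'f) \<times> 'seed) \<Rightarrow> ('s \<Rightarrow> 'f poly) \<Rightarrow> (nat set \<Rightarrow> 'seed)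
   \<Rightarrow> (nat \<Rightarrow> 'a option) \<Rightarrow> nat \<Rightarrow> nat \<Rightarrow> ('s \<Rightarrow> 'f) \<times> (nat set \<Rightarrow> 'seed)" where
  "run n t idx mu G f seed0 inp 0 i = ((\<lambda>j. poly (f j) (idx i)), seed0)"
| "run n t idx mu G f seed0 inp (Suc r) i =
     agent_step n t idx mu G i (inp (Suc r)) (run n t idx mu G f seed0 inp r i)"

definition label where
  "label n t idx mu G f seed0 inp r i j = fst (run n t idx mu G f seed0 inp r i) j"

primrec reach :: "('s \<Rightarrow> 'a \<Rightarrow> 's) \<Rightarrow> 's \<Rightarrow> (nat \<Rightarrow> 'a option) \<Rightarrow> nat \<Rightarrow> 's" where
  "reach mu init inp 0 = init"
| "reach mu init inp (Suc r) =
     (case inp (Suc r) of None \<Rightarrow> reach mu init inp r | Some g \<Rightarrow> mu (reach mu init inp r) g)"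

definition reconstruct :: "nat \<Rightarrow> (nat \<Rightarrow> 'f::field) \<Rightarrow> nat set \<Rightarrow> (nat \<Rightarrow> 's \<Rightarrow> 'f) \<Rightarrow> 's" where
  "reconstruct t idx S L =
     (THE s. poly (THE p. degree p \<le> t \<and> (\<forall>i\<in>S. poly p (idx i) = L i s)) 0 = 1)"

end

theory Submission
  imports Defs
begin

text \<open>
  Call a vector of agent values v a (degree t) sharing of the secret c if
  v i = Q(idx i) for all agents i, for one polynomial Q of degree at most t with Q(0) = c.
  Sharings are closed under addition and finite sums, with the secrets adding up.
  The labels of state s_j start as a sharing of the indicator [s_j = init].  A transition
  replaces the label of s_j by the sum of the labels of its preimages, which is therefore a
  sharing of the sum of the preimages' indicators, i.e. of the indicator of the new state.
  The refresh step adds, for every T, the values of the mask polynomial P^T_j, which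
  vanishes at 0 and at every agent outside T; since all agents of T hold the same seed, the
  total refresh term is a sharing of 0 (agents outside T are masked by P^T_j = 0 anyway).
  Hence after every tick the labels of s_j share the indicator of the current state, and
  t+1 agents recover each sharing polynomial uniquely by interpolation, hence the state.
\<close>

lemma mask_poly_ex1:
  fixes A :: "'f::field set"
  assumes finA: "finite A" and "0 \<notin> A" and "x0 \<notin> A" and "x0 \<noteq> 0"
  shows "\<exists>!p. degree p \<le> card A + 1 \<and> poly p 0 = 0 \<and> (\<forall>a\<in>A. poly p a = 0) \<and> poly p x0 = b"
proof
  define pr where "pr = [:0, 1:] * (\<Prod>a\<in>A. [:-a, 1:])"
  have deg_pr: "degree pr \<le> card A + 1"
  proof -
    have "degree (\<Prod>a\<in>A. [:-a, 1:]) \<le> card A"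
      using degree_prod_sum_le[OF finA, of "\<lambda>a. [:-a, 1:]"] by simp
    then show ?thesis
      unfolding pr_def using degree_mult_le[of "[:0, 1:]" "\<Prod>a\<in>A. [:-a, 1:]"] by simp
  qed
  have pr_x0: "poly pr x0 \<noteq> 0"
    using assms by (auto simp: pr_def poly_prod prod_zero_iff)
  define p where "p = smult (b / poly pr x0) pr"
  show "degree p \<le> card A + 1 \<and> poly p 0 = 0 \<and> (\<forall>a\<in>A. poly p a = 0) \<and> poly p x0 = b"
    using deg_pr pr_x0 finA
    by (auto simp: p_def pr_def poly_prod prod_zero_iff intro: order.trans[OF degree_smult_le])
  fix q assume q: "degree q \<le> card A + 1 \<and> poly q 0 = 0 \<and> (\<forall>a\<in>A. poly q a = 0) \<and> poly q x0 = b"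
  have card_nodes: "card (insert 0 (insert x0 A)) = card A + 2"
    using assms by simp
  show "q = p"
    by (rule poly_eqI_degree[of "insert 0 (insert x0 A)"])
       (use q deg_pr pr_x0 finA card_nodes in
         \<open>auto simp: p_def pr_def poly_prod prod_zero_iff intro: le_less_trans[OF degree_smult_le]\<close>)
qed

lemma PT_masks:
  fixes idx :: "nat \<Rightarrow> 'f::field"
  assumes "1 \<le> t" and "t \<le> n" and inj: "inj_on idx {1..n}"
    and nz: "\<forall>i\<in>{1..n}. idx i \<noteq> 0" and T: "T \<in> Tfam n t"
  shows "degree (PT n t idx T b) \<le> t \<and> poly (PT n t idx T b) 0 = 0
     \<and> (\<forall>a\<in>{1..n} - T. poly (PT n t idx T b) (idx a) = 0)"
proof -
  have Tsub: "T \<subseteq> {1..n}" and cardT: "card T = n - t + 1"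
    using T by (auto simp: Tfam_def)
  have finT: "finite T" using Tsub finite_subset by blast
  then have MinT: "Min T \<in> T" using cardT by (intro Min_in) auto
  define A where "A = idx ` ({1..n} - T)"
  have cardA: "card A + 1 = t"
    using card_image[OF inj_on_subset[OF inj]] card_Diff_subset[OF finT Tsub] cardT assms(1,2)
    by (simp add: A_def)
  have "0 \<notin> A" "idx (Min T) \<notin> A" "idx (Min T) \<noteq> 0"
    using nz inj MinT Tsub by (auto simp: A_def inj_on_def)
  from mask_poly_ex1[OF _ this, of b] have
    "\<exists>!p. degree p \<le> t \<and> poly p 0 = 0 \<and> (\<forall>a\<in>{1..n} - T. poly p (idx a) = 0)
          \<and> poly p (idx (Min T)) = b"
    by (simp add: A_def cardA [symmetric])
  from theI'[OF this] show ?thesis unfolding PT_def by blast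
qed

lemma finite_Tfam: "finite (Tfam n t)"
  by (rule finite_subset[of _ "Pow {1..n}"]) (auto simp: Tfam_def)

definition shares :: "nat \<Rightarrow> nat \<Rightarrow> (nat \<Rightarrow> 'f::field) \<Rightarrow> (nat \<Rightarrow> 'f) \<Rightarrow> 'f \<Rightarrow> bool" where
  "shares n t idx v c \<longleftrightarrow>
     (\<exists>Q. degree Q \<le> t \<and> (\<forall>i\<in>{1..n}. v i = poly Q (idx i)) \<and> poly Q 0 = c)"

lemma shares_add:
  assumes "shares n t idx v c" and "shares n t idx w d"
  shows "shares n t idx (\<lambda>i. v i + w i) (c + d)"
proof -
  from assms obtain P Q where
    "degree P \<le> t" "\<forall>i\<in>{1..n}. v i = poly P (idx i)" "poly P 0 = c"
    "degree Q \<le> t" "\<forall>i\<in>{1..n}. w i = poly Q (idx i)" "poly Q 0 = d"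
    unfolding shares_def by blast
  then show ?thesis
    unfolding shares_def by (intro exI[of _ "P + Q"]) (auto intro: degree_add_le)
qed

lemma shares_sum:
  assumes "finite K" and "\<And>k. k \<in> K \<Longrightarrow> shares n t idx (v k) (c k)"
  shows "shares n t idx (\<lambda>i. \<Sum>k\<in>K. v k i) (\<Sum>k\<in>K. c k)"
  using assms
proof (induction K rule: finite_induct)
  case empty
  show ?case unfolding shares_def by (intro exI[of _ 0]) simp
next
  case (insert k K)
  then show ?case using shares_add[of n t idx "v k" "c k"] by simp
qed

text \<open>The refresh term added at a tick is a sharing of 0, provided every T's mask is chosen
  from one common value b T (all members of T hold the same seed).  Agents outside T do not
  add P^T_j, but P^T_j vanishes at their points, so the sum may range over all of Tfam.\<close>
lemma refresh_shares_zero: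
  fixes idx :: "nat \<Rightarrow> 'f::field"
  assumes "1 \<le> t" and "t \<le> n" and "inj_on idx {1..n}" and "\<forall>i\<in>{1..n}. idx i \<noteq> 0"
  shows "shares n t idx
           (\<lambda>i. \<Sum>T\<in>{T\<in>Tfam n t. i \<in> T}. poly (PT n t idx T (b T)) (idx i)) 0"
proof -
  note masks = PT_masks[OF assms]
  have "(\<Sum>T\<in>{T\<in>Tfam n t. i \<in> T}. poly (PT n t idx T (b T)) (idx i))
        = poly (\<Sum>T\<in>Tfam n t. PT n t idx T (b T)) (idx i)" if "i \<in> {1..n}" for i
    unfolding poly_sum
    by (rule sum.mono_neutral_left) (use masks that in \<open>auto simp: finite_Tfam\<close>)
  moreover have "degree (\<Sum>T\<in>Tfam n t. PT n t idx T (b T)) \<le> t"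
    using masks by (intro degree_sum_le) (auto simp: finite_Tfam)
  moreover have "poly (\<Sum>T\<in>Tfam n t. PT n t idx T (b T)) 0 = 0"
    using masks by (simp add: poly_sum)
  ultimately show ?thesis unfolding shares_def by blast
qed

lemma the_interpolant:
  fixes idx :: "nat \<Rightarrow> 'f::field"
  assumes "inj_on idx S" and "card S > t" and "degree Q \<le> t"
    and "\<forall>i\<in>S. y i = poly Q (idx i)"
  shows "(THE p. degree p \<le> t \<and> (\<forall>i\<in>S. poly p (idx i) = y i)) = Q"
proof (rule the_equality)
  show "degree Q \<le> t \<and> (\<forall>i\<in>S. poly Q (idx i) = y i)" using assms by simp
  fix p assume p: "degree p \<le> t \<and> (\<forall>i\<in>S. poly p (idx i) = y i)"
  show "p = Q"
    by (rule poly_eqI_degree[of "idx ` S"]) (use p assms in \<open>auto simp: card_image\<close>)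
qed

lemma reconstruct_shared_state:
  fixes idx :: "nat \<Rightarrow> 'f::field" and L :: "nat \<Rightarrow> 's \<Rightarrow> 'f"
  assumes inj: "inj_on idx {1..n}" and S: "S \<subseteq> {1..n}" "card S \<ge> t + 1"
    and sh: "\<And>s. shares n t idx (\<lambda>i. L i s) (if s = s0 then 1 else 0)"
  shows "reconstruct t idx S L = s0"
proof -
  obtain Q where Q: "\<And>s. degree (Q s) \<le> t \<and> (\<forall>i\<in>{1..n}. L i s = poly (Q s) (idx i))
                          \<and> poly (Q s) 0 = (if s = s0 then 1 else 0)"
    using sh unfolding shares_def by metis
  have "(THE p. degree p \<le> t \<and> (\<forall>i\<in>S. poly p (idx i) = L i s)) = Q s" for s
    using Q[of s] S inj_on_subset[OF inj S(1)] by (intro the_interpolant) auto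
  then show ?thesis
    unfolding reconstruct_def using Q by (auto split: if_splits)
qed

lemma run_seed:
  "i \<in> T \<Longrightarrow> snd (run n t idx mu G f seed0 inp r i) T = ((snd \<circ> G) ^^ r) (seed0 T)"
  by (induction r) (simp_all add: agent_step_def Let_def)

lemma label_Suc:
  "label n t idx mu G f seed0 inp (Suc r) i j =
    (case inp (Suc r) of None \<Rightarrow> label n t idx mu G f seed0 inp r i j
       | Some g \<Rightarrow> (\<Sum>k\<in>{k. mu k g = j}. label n t idx mu G f seed0 inp r i k))
    + (\<Sum>T\<in>{T\<in>Tfam n t. i \<in> T}.
         poly (PT n t idx T (fst (G (((snd \<circ> G) ^^ r) (seed0 T))) j)) (idx i))"
proof -
  have "(\<Sum>T\<in>{T\<in>Tfam n t. i \<in> T}.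
           poly (PT n t idx T (fst (G (snd (run n t idx mu G f seed0 inp r i) T)) j)) (idx i))
      = (\<Sum>T\<in>{T\<in>Tfam n t. i \<in> T}.
           poly (PT n t idx T (fst (G (((snd \<circ> G) ^^ r) (seed0 T))) j)) (idx i))"
    by (rule sum.cong) (auto simp: run_seed)
  then show ?thesis
    by (simp add: label_def agent_step_def Let_def split: option.splits)
qed

lemma labels_share_state:
  fixes idx :: "nat \<Rightarrow> 'f::field" and mu :: "'s::finite \<Rightarrow> 'a \<Rightarrow> 's"
  assumes "1 \<le> t" and "t \<le> n" and "inj_on idx {1..n}" and "\<forall>i\<in>{1..n}. idx i \<noteq> 0"
    and f: "\<forall>j. degree (f j) \<le> t \<and> poly (f j) 0 = (if j = init then 1 else 0)"
  shows "shares n t idx (\<lambda>i. label n t idx mu G f seed0 inp r i j)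
           (if j = reach mu init inp r then 1 else 0)"
proof (induction r arbitrary: j)
  case 0
  show ?case using f unfolding shares_def label_def by (intro exI[of _ "f j"]) simp
next
  case (Suc r)
  let ?c = "\<lambda>k. if k = reach mu init inp r then 1 else (0::'f)"
  have transition: "shares n t idx
      (\<lambda>i. case inp (Suc r) of None \<Rightarrow> label n t idx mu G f seed0 inp r i j
             | Some g \<Rightarrow> (\<Sum>k\<in>{k. mu k g = j}. label n t idx mu G f seed0 inp r i k))
      (if j = reach mu init inp (Suc r) then 1 else 0)"
  proof (cases "inp (Suc r)")
    case None
    then show ?thesis using Suc.IH by simp
  next
    case (Some g)
    have "shares n t idx (\<lambda>i. \<Sum>k\<in>{k. mu k g = j}. label n t idx mu G f seed0 inp r i k)
            (\<Sum>k\<in>{k. mu k g = j}. ?c k)"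
      using Suc.IH by (intro shares_sum) auto
    moreover have "(\<Sum>k\<in>{k. mu k g = j}. ?c k) = (if j = reach mu init inp (Suc r) then 1 else 0)"
      using Some by (simp add: sum.delta')
    ultimately show ?thesis using Some by simp
  qed
  show ?case
    using shares_add[OF transition refresh_shares_zero[OF assms(1-4)]]
    by (simp add: label_Suc)
qed

theorem proposition3:
  fixes n t :: nat
    and idx :: "nat \<Rightarrow> 'f::{field,finite}"
    and mu :: "'s::finite \<Rightarrow> 'a \<Rightarrow> 's"
    and init :: 's
    and G :: "'seed \<Rightarrow> ('s \<Rightarrow> 'f) \<times> 'seed"
    and f :: "'s \<Rightarrow> 'f poly"
    and seed0 :: "nat set \<Rightarrow> 'seed"
    and inp :: "nat \<Rightarrow> 'a option"
  assumes "1 \<le> t" and "n > 2 * t"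
    and "card (UNIV :: 'f set) > n"
    and "inj_on idx {1..n}" and "\<forall>i\<in>{1..n}. idx i \<noteq> 0"
    and "\<forall>j. degree (f j) \<le> t \<and> poly (f j) 0 = (if j = init then 1 else 0)"
  shows "(\<forall>r j. \<exists>Q. degree Q \<le> t
            \<and> (\<forall>i\<in>{1..n}. label n t idx mu G f seed0 inp r i j = poly Q (idx i))
            \<and> poly Q 0 = (if j = reach mu init inp r then 1 else 0))
         \<and> (\<forall>r S. S \<subseteq> {1..n} \<and> card S \<ge> t + 1 \<longrightarrow>
            reconstruct t idx S (label n t idx mu G f seed0 inp r) = reach mu init inp r)"
proof -
  have "t \<le> n" using assms(2) by simp
  note invariant = labels_share_state[OF assms(1) this assms(4-6)]
  show ?thesis
  proof (intro conjI allI impI)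
    show "\<exists>Q. degree Q \<le> t
            \<and> (\<forall>i\<in>{1..n}. label n t idx mu G f seed0 inp r i j = poly Q (idx i))
            \<and> poly Q 0 = (if j = reach mu init inp r then 1 else 0)" for r j
      using invariant unfolding shares_def by blast
    show "reconstruct t idx S (label n t idx mu G f seed0 inp r) = reach mu init inp r"
      if "S \<subseteq> {1..n} \<and> card S \<ge> t + 1" for r S
      using that by (intro reconstruct_shared_state[OF assms(4)] invariant) auto
  qed
qed

end
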